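(* Given the ability to perform incoherent unitaries, computational basis measurements and classical control, it is impossible to implement any coherent unitary (e.g. the Hadamard gate) exactly with any non-zero probability, even when supplemented with an arbitrary ancillary state.
   Context: Fix the computational basis $\{|x\rangle\}$. A unitary is incoherent if it has the form $U=\sum_x e^{i\theta_x}|\pi(x)\rangle\langle x|$ for real $\theta_x$ and a permutation $\pi$; otherwise it is coherent (maps some basis state to a superposition). Operations built from incoherent unitaries, computational basis measurements/preparations, classical control and an ancilla $\tau$ are modelled (via deferred measurement, with quantum-controlled incoherent unitaries being incoherent) as channels $\rho\mapsto \mathrm{Tr}_2\big(U(\rho\otimes\tau)U^\dagger\big)$ with $U$ incoherent, or in the probabilistic case as convex combinations of normalised subchannels $\rho\mapsto \alpha\,\mathrm{Tr}_X\big((I\otimes|x\rangle\langle x|)\,U(\rho\otimes\tau)U^\dagger\big)$ with $\alpha$ independent of $\rho$. The ancilla $\tau$ is an arbitrary fixed state of arbitrary dimension. *)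

theory Defs
  imports Complex_Main "Jordan_Normal_Form.Matrix"
begin

text \<open>A bipartite space C^d (x) C^m is indexed by
i*m + j for i<d, j<m (first factor = system, second factor = ancilla / register).\<close>

definition cadj :: "complex mat \<Rightarrow> complex mat" where
  "cadj A = mat (dim_col A) (dim_row A) (\<lambda>(i,j). cnj (A $$ (j,i)))"

definition mtrace :: "complex mat \<Rightarrow> complex" where
  "mtrace A = (\<Sum>i<dim_row A. A $$ (i,i))"

definition unitary_mat :: "nat \<Rightarrow> complex mat \<Rightarrow> bool" where
  "unitary_mat n U \<longleftrightarrow> U \<in> carrier_mat n n \<and> cadj U * U = 1\<^sub>m n \<and> U * cadj U = 1\<^sub>m n"

definition psd_mat :: "nat \<Rightarrow> complex mat \<Rightarrow> bool" where
  "psd_mat n A \<longleftrightarrow> A \<in> carrier_mat n n \<and>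
     (\<forall>v :: nat \<Rightarrow> complex.
        Im (\<Sum>i<n. \<Sum>j<n. cnj (v i) * A $$ (i,j) * v j) = 0 \<and>
        Re (\<Sum>i<n. \<Sum>j<n. cnj (v i) * A $$ (i,j) * v j) \<ge> 0)"

definition density :: "nat \<Rightarrow> complex mat \<Rightarrow> bool" where
  "density n \<rho> \<longleftrightarrow> psd_mat n \<rho> \<and> mtrace \<rho> = 1"

definition incoherent_unitary :: "nat \<Rightarrow> complex mat \<Rightarrow> bool" where
  "incoherent_unitary n U \<longleftrightarrow> U \<in> carrier_mat n n \<and>
     (\<exists>\<pi> \<theta>. \<pi> permutes {..<n} \<and>
        (\<forall>r<n. \<forall>c<n. U $$ (r,c) = (if r = \<pi> c then cis (\<theta> c) else 0)))"

definition coherent_unitary :: "nat \<Rightarrow> complex mat \<Rightarrow> bool" where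
  "coherent_unitary n V \<longleftrightarrow> unitary_mat n V \<and> \<not> incoherent_unitary n V"

definition kron :: "nat \<Rightarrow> nat \<Rightarrow> complex mat \<Rightarrow> complex mat \<Rightarrow> complex mat" where
  "kron d m A B = mat (d*m) (d*m) (\<lambda>(r,c). A $$ (r div m, c div m) * B $$ (r mod m, c mod m))"

definition ptrace2 :: "nat \<Rightarrow> nat \<Rightarrow> complex mat \<Rightarrow> complex mat" where
  "ptrace2 d m M = mat d d (\<lambda>(i,i'). \<Sum>j<m. M $$ (i*m + j, i'*m + j))"

definition basis_proj :: "nat \<Rightarrow> nat \<Rightarrow> complex mat" where
  "basis_proj m x = mat m m (\<lambda>(i,j). if i = x \<and> j = x then 1 else 0)"

definition inc_channel ::
  "nat \<Rightarrow> nat \<Rightarrow> complex mat \<Rightarrow> complex mat \<Rightarrow> complex mat \<Rightarrow> complex mat" where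
  "inc_channel d m U \<tau> \<rho> = ptrace2 d m (U * kron d m \<rho> \<tau> * cadj U)"

definition inc_subchannel ::
  "nat \<Rightarrow> nat \<Rightarrow> complex mat \<Rightarrow> complex mat \<Rightarrow> nat \<Rightarrow> real \<Rightarrow> complex mat \<Rightarrow> complex mat" where
  "inc_subchannel d m U \<tau> x \<alpha> \<rho> =
     complex_of_real \<alpha> \<cdot>\<^sub>m ptrace2 d m (kron d m (1\<^sub>m d) (basis_proj m x) * U * kron d m \<rho> \<tau> * cadj U)"

end

theory Submission
  imports Defs
begin

text \<open>An incoherent unitary permutes the computational basis up to phases, so the diagonal of
\<open>U M U\<^sup>\<dagger>\<close> is a permutation of the diagonal of \<open>M\<close>. Appending a fixed ancilla, projecting the
register onto a basis state, scaling and tracing out the ancilla keep the output diagonal a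
function of the input diagonal alone; so does every positive combination of such subchannels.
If one of them equalled \<open>\<rho> \<mapsto> p V \<rho> V\<^sup>\<dagger>\<close> with \<open>p > 0\<close>, conjugation by \<open>V\<close> would inherit this
property. The states \<open>(|a\<rangle> + c|b\<rangle>)/\<surd>2\<close> with \<open>|c| = 1\<close> all have the same diagonal, which forces
\<open>|V\<^sub>i\<^sub>a + c V\<^sub>i\<^sub>b|\<close> to be independent of \<open>c\<close>, hence \<open>V\<^sub>i\<^sub>a V\<^sub>i\<^sub>b = 0\<close> for \<open>a \<noteq> b\<close>. A unitary with at
most one nonzero entry per row is a phased permutation matrix, i.e. incoherent.\<close>

lemma index_mult_mat_sum:
  assumes "A \<in> carrier_mat n k" "B \<in> carrier_mat k l" "i < n" "j < l"
  shows "(A * B) $$ (i,j) = (\<Sum>t<k. A $$ (i,t) * B $$ (t,j))"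
  using assms by (auto simp: scalar_prod_def lessThan_atLeast0 intro!: sum.cong)

lemma cadj_carrier_mat [simp]: "A \<in> carrier_mat n k \<Longrightarrow> cadj A \<in> carrier_mat k n"
  by (auto simp: cadj_def)

lemma index_cadj: "A \<in> carrier_mat n k \<Longrightarrow> i < k \<Longrightarrow> j < n \<Longrightarrow> cadj A $$ (i,j) = cnj (A $$ (j,i))"
  by (auto simp: cadj_def)

lemma kron_carrier_mat [simp]: "kron d m A B \<in> carrier_mat (d*m) (d*m)"
  by (simp add: kron_def)

lemma index_mult_mat_diag_left:
  assumes P: "P \<in> carrier_mat n n" and X: "X \<in> carrier_mat n n" and r: "r < n"
    and off_diag: "\<And>t. t < n \<Longrightarrow> t \<noteq> r \<Longrightarrow> P $$ (r,t) = 0"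
  shows "(P * X) $$ (r,r) = P $$ (r,r) * X $$ (r,r)"
proof -
  have "(P * X) $$ (r,r) = (\<Sum>t<n. P $$ (r,t) * X $$ (t,r))"
    by (rule index_mult_mat_sum[OF P X r r])
  also have "\<dots> = (\<Sum>t<n. if t = r then P $$ (r,r) * X $$ (r,r) else 0)"
    using off_diag by (intro sum.cong) auto
  finally show ?thesis
    using r by simp
qed

subsection \<open>Diagonals\<close>

definition same_diag :: "nat \<Rightarrow> complex mat \<Rightarrow> complex mat \<Rightarrow> bool" where
  "same_diag n A B \<longleftrightarrow> (\<forall>a<n. A $$ (a,a) = B $$ (a,a))"

definition conj_respects_same_diag :: "nat \<Rightarrow> complex mat \<Rightarrow> bool" where
  "conj_respects_same_diag d V \<longleftrightarrow>
     (\<forall>\<rho>\<^sub>1 \<rho>\<^sub>2. density d \<rho>\<^sub>1 \<longrightarrow> density d \<rho>\<^sub>2 \<longrightarrow> same_diag d \<rho>\<^sub>1 \<rho>\<^sub>2 \<longrightarrow>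
        same_diag d (V * \<rho>\<^sub>1 * cadj V) (V * \<rho>\<^sub>2 * cadj V))"

lemma incoherent_unitary_conj_diag:
  assumes "incoherent_unitary n U"
  obtains \<sigma> where "\<And>a. a < n \<Longrightarrow> \<sigma> a < n"
    and "\<And>M a. M \<in> carrier_mat n n \<Longrightarrow> a < n \<Longrightarrow> (U * M * cadj U) $$ (a,a) = M $$ (\<sigma> a, \<sigma> a)"
proof -
  from assms obtain \<pi> \<theta> where U: "U \<in> carrier_mat n n" and \<pi>: "\<pi> permutes {..<n}"
    and U_entry: "\<And>r c. r < n \<Longrightarrow> c < n \<Longrightarrow> U $$ (r,c) = (if r = \<pi> c then cis (\<theta> c) else 0)"
    unfolding incoherent_unitary_def by blast
  define \<sigma> where "\<sigma> = Hilbert_Choice.inv \<pi>"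
  have \<sigma>_lt: "\<sigma> a < n" if "a < n" for a
    using permutes_in_image[OF permutes_inv[OF \<pi>]] that by (auto simp: \<sigma>_def)
  have \<sigma>_eq: "a = \<pi> t \<longleftrightarrow> t = \<sigma> a" for a t
    unfolding \<sigma>_def using permutes_inv_eq[OF \<pi>] by metis
  have U_row: "U $$ (a,t) = (if t = \<sigma> a then cis (\<theta> (\<sigma> a)) else 0)" if "a < n" "t < n" for a t
    using U_entry[OF that] by (auto simp: \<sigma>_eq)
  have "(U * M * cadj U) $$ (a,a) = M $$ (\<sigma> a, \<sigma> a)" if M: "M \<in> carrier_mat n n" and a: "a < n" for M a
  proof -
    have UM: "(U * M) $$ (a,u) = cis (\<theta> (\<sigma> a)) * M $$ (\<sigma> a, u)" if "u < n" for u
    proof -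
      have "(U * M) $$ (a,u) = (\<Sum>t<n. U $$ (a,t) * M $$ (t,u))"
        using U M a that by (intro index_mult_mat_sum) auto
      also have "\<dots> = (\<Sum>t<n. if t = \<sigma> a then cis (\<theta> (\<sigma> a)) * M $$ (t,u) else 0)"
        using U_row a by (intro sum.cong) auto
      finally show ?thesis
        using \<sigma>_lt[OF a] by simp
    qed
    have "(U * M * cadj U) $$ (a,a) = (\<Sum>u<n. (U * M) $$ (a,u) * cadj U $$ (u,a))"
      using U M a by (intro index_mult_mat_sum) auto
    also have "\<dots> = (\<Sum>u<n. (U * M) $$ (a,u) * cnj (U $$ (a,u)))"
      using U a by (intro sum.cong) (simp_all add: index_cadj)
    also have "\<dots> = (\<Sum>u<n. if u = \<sigma> a then M $$ (\<sigma> a, u) * (cis (\<theta> (\<sigma> a)) * cnj (cis (\<theta> (\<sigma> a)))) else 0)"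
      using UM U_row a by (intro sum.cong) auto
    finally show ?thesis
      using \<sigma>_lt[OF a] by (simp add: cis_cnj cis_mult)
  qed
  with \<sigma>_lt that show thesis
    by blast
qed

lemma incoherent_unitary_conj_same_diag:
  assumes "incoherent_unitary n U" "M \<in> carrier_mat n n" "N \<in> carrier_mat n n" "same_diag n M N"
  shows "same_diag n (U * M * cadj U) (U * N * cadj U)"
proof -
  obtain \<sigma> where "\<And>a. a < n \<Longrightarrow> \<sigma> a < n"
    and "\<And>M a. M \<in> carrier_mat n n \<Longrightarrow> a < n \<Longrightarrow> (U * M * cadj U) $$ (a,a) = M $$ (\<sigma> a, \<sigma> a)"
    using incoherent_unitary_conj_diag[OF assms(1)] by blast
  with assms(2-4) show ?thesis
    by (simp add: same_diag_def)
qed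

lemma kron_same_diag:
  assumes "same_diag d A B"
  shows "same_diag (d*m) (kron d m A C) (kron d m B C)"
  using assms by (simp add: same_diag_def kron_def less_mult_imp_div_less)

lemma ptrace2_same_diag:
  assumes "same_diag (d*m) X Y"
  shows "same_diag d (ptrace2 d m X) (ptrace2 d m Y)"
proof -
  have "i*m + j < d*m" if "i < d" "j < m" for i j
  proof -
    have "i*m + j < (i+1)*m" using that by simp
    also have "\<dots> \<le> d*m" using that by (intro mult_right_mono) auto
    finally show ?thesis .
  qed
  with assms show ?thesis
    by (simp add: same_diag_def ptrace2_def)
qed

lemma kron_id_basis_proj_mult_same_diag:
  assumes X: "X \<in> carrier_mat (d*m) (d*m)" and Y: "Y \<in> carrier_mat (d*m) (d*m)"
    and XY: "same_diag (d*m) X Y"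
  shows "same_diag (d*m) (kron d m (1\<^sub>m d) (basis_proj m x) * X) (kron d m (1\<^sub>m d) (basis_proj m x) * Y)"
  unfolding same_diag_def
proof (intro allI impI)
  fix r assume r: "r < d*m"
  then have "0 < m"
    by (cases m) auto
  let ?P = "kron d m (1\<^sub>m d) (basis_proj m x)"
  have "?P $$ (r,t) = 0" if t: "t < d*m" "t \<noteq> r" for t
  proof -
    have "r div m \<noteq> t div m \<or> r mod m \<noteq> t mod m"
      using t(2) by (metis div_mult_mod_eq)
    moreover have "r div m < d" "t div m < d" "r mod m < m" "t mod m < m"
      using r t(1) \<open>0 < m\<close> by (auto simp: less_mult_imp_div_less)
    ultimately show ?thesis
      using r t(1) by (auto simp: kron_def basis_proj_def)
  qed
  then have "(?P * Z) $$ (r,r) = ?P $$ (r,r) * Z $$ (r,r)" if "Z \<in> carrier_mat (d*m) (d*m)" for Z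
    using r that by (intro index_mult_mat_diag_left) auto
  with X Y XY r show "(?P * X) $$ (r,r) = (?P * Y) $$ (r,r)"
    by (simp add: same_diag_def)
qed

lemma inc_channel_same_diag:
  assumes "incoherent_unitary (d*m) U" "same_diag d \<rho>\<^sub>1 \<rho>\<^sub>2"
  shows "same_diag d (inc_channel d m U \<tau> \<rho>\<^sub>1) (inc_channel d m U \<tau> \<rho>\<^sub>2)"
  unfolding inc_channel_def
  by (intro ptrace2_same_diag incoherent_unitary_conj_same_diag kron_same_diag assms kron_carrier_mat)

lemma inc_subchannel_same_diag:
  assumes U: "incoherent_unitary (d*m) U" and \<rho>: "same_diag d \<rho>\<^sub>1 \<rho>\<^sub>2"
  shows "same_diag d (inc_subchannel d m U \<tau> x \<alpha> \<rho>\<^sub>1) (inc_subchannel d m U \<tau> x \<alpha> \<rho>\<^sub>2)"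
proof -
  let ?P = "kron d m (1\<^sub>m d) (basis_proj m x)"
  let ?X = "\<lambda>\<rho>. U * kron d m \<rho> \<tau> * cadj U"
  have Uc: "U \<in> carrier_mat (d*m) (d*m)"
    using U by (simp add: incoherent_unitary_def)
  then have X: "?X \<rho> \<in> carrier_mat (d*m) (d*m)" for \<rho>
    by (meson mult_carrier_mat kron_carrier_mat cadj_carrier_mat)
  have "?P * U * kron d m \<rho> \<tau> * cadj U = ?P * ?X \<rho>" for \<rho>
    using Uc by (simp add: assoc_mult_mat[of _ "d*m" "d*m" _ "d*m" _ "d*m"])
  moreover have "same_diag d (ptrace2 d m (?P * ?X \<rho>\<^sub>1)) (ptrace2 d m (?P * ?X \<rho>\<^sub>2))"
    using U \<rho> X by (intro ptrace2_same_diag kron_id_basis_proj_mult_same_diag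
        incoherent_unitary_conj_same_diag kron_same_diag) auto
  ultimately show ?thesis
    by (simp add: inc_subchannel_def same_diag_def ptrace2_def)
qed

lemma conj_respects_same_diag_if_inc_channel:
  assumes U: "incoherent_unitary (d*m) U"
    and implements: "\<forall>\<rho>. density d \<rho> \<longrightarrow> inc_channel d m U \<tau> \<rho> = V * \<rho> * cadj V"
  shows "conj_respects_same_diag d V"
  unfolding conj_respects_same_diag_def using implements inc_channel_same_diag[OF U] by metis

lemma conj_respects_same_diag_if_sum_inc_subchannel:
  assumes U: "\<forall>k\<in>K. incoherent_unitary (d * m k) (U k)" and "p \<noteq> 0"
    and implements: "\<forall>\<rho>. density d \<rho> \<longrightarrow>
          (\<forall>i<d. \<forall>j<d. (\<Sum>k\<in>K. inc_subchannel d (m k) (U k) (\<tau> k) (x k) (\<alpha> k) \<rho> $$ (i,j))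
                         = complex_of_real p * (V * \<rho> * cadj V) $$ (i,j))"
  shows "conj_respects_same_diag d V"
  unfolding conj_respects_same_diag_def
proof (intro allI impI)
  fix \<rho>\<^sub>1 \<rho>\<^sub>2 assume \<rho>: "density d \<rho>\<^sub>1" "density d \<rho>\<^sub>2" "same_diag d \<rho>\<^sub>1 \<rho>\<^sub>2"
  have "(\<Sum>k\<in>K. inc_subchannel d (m k) (U k) (\<tau> k) (x k) (\<alpha> k) \<rho>\<^sub>1 $$ (i,i))
      = (\<Sum>k\<in>K. inc_subchannel d (m k) (U k) (\<tau> k) (x k) (\<alpha> k) \<rho>\<^sub>2 $$ (i,i))" if "i < d" for i
    using U \<rho>(3) inc_subchannel_same_diag that by (intro sum.cong) (auto simp: same_diag_def)
  with implements \<rho> \<open>p \<noteq> 0\<close> show "same_diag d (V * \<rho>\<^sub>1 * cadj V) (V * \<rho>\<^sub>2 * cadj V)"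
    by (simp add: same_diag_def)
qed

subsection \<open>Unitaries whose conjugation respects diagonals\<close>

definition ket_bra :: "nat \<Rightarrow> (nat \<Rightarrow> complex) \<Rightarrow> complex mat" where
  "ket_bra d \<phi> = mat d d (\<lambda>(i,j). \<phi> i * cnj (\<phi> j))"

lemma density_ket_bra:
  assumes "(\<Sum>i<d. (cmod (\<phi> i))\<^sup>2) = 1"
  shows "density d (ket_bra d \<phi>)"
proof -
  have quadratic_form: "(\<Sum>i<d. \<Sum>j<d. cnj (v i) * ket_bra d \<phi> $$ (i,j) * v j)
        = of_real ((cmod (\<Sum>i<d. cnj (v i) * \<phi> i))\<^sup>2)" for v
  proof -
    have "(\<Sum>i<d. \<Sum>j<d. cnj (v i) * ket_bra d \<phi> $$ (i,j) * v j)
        = (\<Sum>i<d. \<Sum>j<d. (cnj (v i) * \<phi> i) * cnj (cnj (v j) * \<phi> j))"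
      by (intro sum.cong refl) (simp add: ket_bra_def mult_ac)
    also have "\<dots> = (\<Sum>i<d. cnj (v i) * \<phi> i) * cnj (\<Sum>i<d. cnj (v i) * \<phi> i)"
      by (simp add: cnj_sum sum_product)
    finally show ?thesis
      by (simp only: complex_norm_square)
  qed
  have "mtrace (ket_bra d \<phi>) = (\<Sum>i<d. of_real ((cmod (\<phi> i))\<^sup>2))"
    unfolding complex_norm_square by (simp add: mtrace_def ket_bra_def)
  also have "\<dots> = 1"
    using assms by (simp only: of_real_sum[symmetric]) simp
  finally have "mtrace (ket_bra d \<phi>) = 1" .
  moreover have "ket_bra d \<phi> \<in> carrier_mat d d"
    by (simp add: ket_bra_def)
  ultimately show ?thesis
    by (simp add: density_def psd_mat_def quadratic_form)
qed

lemma ket_bra_conj_diag: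
  assumes V: "V \<in> carrier_mat d d" and i: "i < d"
  shows "(V * ket_bra d \<phi> * cadj V) $$ (i,i) = of_real ((cmod (\<Sum>k<d. V $$ (i,k) * \<phi> k))\<^sup>2)"
proof -
  let ?w = "\<Sum>k<d. V $$ (i,k) * \<phi> k"
  have P: "ket_bra d \<phi> \<in> carrier_mat d d"
    by (simp add: ket_bra_def)
  have "(V * ket_bra d \<phi>) $$ (i,u) = ?w * cnj (\<phi> u)" if u: "u < d" for u
  proof -
    have "(V * ket_bra d \<phi>) $$ (i,u) = (\<Sum>k<d. V $$ (i,k) * ket_bra d \<phi> $$ (k,u))"
      using V P i u by (intro index_mult_mat_sum) auto
    then show ?thesis
      using u by (simp add: ket_bra_def sum_distrib_left sum_distrib_right mult_ac)
  qed
  moreover have "(V * ket_bra d \<phi> * cadj V) $$ (i,i) = (\<Sum>u<d. (V * ket_bra d \<phi>) $$ (i,u) * cadj V $$ (u,i))"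
    using V P i by (intro index_mult_mat_sum) auto
  ultimately have "(V * ket_bra d \<phi> * cadj V) $$ (i,i) = (\<Sum>u<d. ?w * cnj (\<phi> u) * cnj (V $$ (i,u)))"
    using V i by (simp add: index_cadj)
  also have "\<dots> = ?w * cnj ?w"
    by (simp add: sum_distrib_left cnj_sum mult_ac)
  finally show ?thesis
    by (simp only: complex_norm_square)
qed

lemma cmod_plus_minus_eq_imp_zero:
  fixes z w :: complex
  assumes "cmod (z + w) = cmod (z - w)" and "cmod (z + \<i> * w) = cmod (z - \<i> * w)"
  shows "z = 0 \<or> w = 0"
proof -
  have mult_cnj_eq: "x * cnj x = y * cnj y" if "cmod x = cmod y" for x y :: complex
    using that by (metis complex_norm_square)
  have "2 * (z * cnj w + w * cnj z) = 0"
    using mult_cnj_eq[OF assms(1)] by (simp add: algebra_simps)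
  then have "z * cnj w + w * cnj z = 0"
    by (metis mult_eq_0_iff zero_neq_numeral)
  moreover have "z * cnj w - w * cnj z = 0"
    using mult_cnj_eq[OF assms(2)] by (simp add: algebra_simps)
  ultimately have "z * cnj w = 0"
    by (simp add: algebra_simps)
  then show ?thesis
    by simp
qed

lemma conj_respects_same_diag_row_support:
  assumes V: "V \<in> carrier_mat d d" and resp: "conj_respects_same_diag d V"
    and i: "i < d" and a: "a < d" and b: "b < d" and "a \<noteq> b"
  shows "V $$ (i,a) = 0 \<or> V $$ (i,b) = 0"
proof -
  define \<phi> where "\<phi> c k = ((if k = a then 1 else 0) + (if k = b then c else 0)) / of_real (sqrt 2)"
    for c :: complex and k
  have cmod_\<phi>: "(cmod (\<phi> c k))\<^sup>2 = ((if k = a then 1 else 0) + (if k = b then 1 else 0)) / 2"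
    if "cmod c = 1" for c k
    using that \<open>a \<noteq> b\<close> by (auto simp: \<phi>_def norm_divide power_divide)
  have density: "density d (ket_bra d (\<phi> c))" if "cmod c = 1" for c
    using a b by (intro density_ket_bra) (simp add: cmod_\<phi>[OF that] sum.distrib sum_divide_distrib[symmetric])
  have "cmod (\<phi> (-c) k) = cmod (\<phi> c k)" for c k
    using \<open>a \<noteq> b\<close> by (auto simp: \<phi>_def norm_divide)
  then have "\<phi> (-c) k * cnj (\<phi> (-c) k) = \<phi> c k * cnj (\<phi> c k)" for c k
    by (metis complex_norm_square)
  then have same: "same_diag d (ket_bra d (\<phi> c)) (ket_bra d (\<phi> (-c)))" for c
    by (simp add: same_diag_def ket_bra_def)
  have amplitude: "(\<Sum>k<d. V $$ (i,k) * \<phi> c k) = (V $$ (i,a) + c * V $$ (i,b)) / of_real (sqrt 2)" for c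
  proof -
    have "(\<Sum>k<d. V $$ (i,k) * \<phi> c k)
        = (\<Sum>k<d. (if k = a then V $$ (i,a) else 0) + (if k = b then c * V $$ (i,b) else 0)) / of_real (sqrt 2)"
      unfolding sum_divide_distrib using \<open>a \<noteq> b\<close> by (intro sum.cong) (auto simp: \<phi>_def)
    then show ?thesis
      using a b by (simp add: sum.distrib)
  qed
  have balanced: "cmod (V $$ (i,a) + c * V $$ (i,b)) = cmod (V $$ (i,a) - c * V $$ (i,b))"
    if c: "cmod c = 1" for c
  proof -
    have "cmod (-c) = 1"
      using c by simp
    then have "same_diag d (V * ket_bra d (\<phi> c) * cadj V) (V * ket_bra d (\<phi> (-c)) * cadj V)"
      using resp density[OF c] density same unfolding conj_respects_same_diag_def by blast
    then have "(V * ket_bra d (\<phi> c) * cadj V) $$ (i,i) = (V * ket_bra d (\<phi> (-c)) * cadj V) $$ (i,i)"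
      using i unfolding same_diag_def by blast
    then have "cmod (\<Sum>k<d. V $$ (i,k) * \<phi> c k) = cmod (\<Sum>k<d. V $$ (i,k) * \<phi> (-c) k)"
      unfolding ket_bra_conj_diag[OF V i] of_real_eq_iff by simp
    then show ?thesis
      by (simp add: amplitude norm_divide)
  qed
  show ?thesis
    using balanced[of 1] balanced[of \<i>] by (intro cmod_plus_minus_eq_imp_zero) auto
qed

subsection \<open>Unitaries with one nonzero entry per row\<close>

lemma unitary_rows_orthonormal:
  assumes V: "unitary_mat d V" and "i < d" "j < d"
  shows "(\<Sum>k<d. V $$ (i,k) * cnj (V $$ (j,k))) = (if i = j then 1 else 0)"
proof -
  have Vc: "V \<in> carrier_mat d d"
    using V by (simp add: unitary_mat_def)
  have "(V * cadj V) $$ (i,j) = (\<Sum>k<d. V $$ (i,k) * cadj V $$ (k,j))"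
    using Vc assms by (intro index_mult_mat_sum) auto
  also have "\<dots> = (\<Sum>k<d. V $$ (i,k) * cnj (V $$ (j,k)))"
    using Vc assms by (intro sum.cong refl) (simp add: index_cadj)
  finally show ?thesis
    using V assms by (simp add: unitary_mat_def)
qed

lemma unitary_column_norm:
  assumes V: "unitary_mat d V" and c: "c < d"
  shows "(\<Sum>k<d. (cmod (V $$ (k,c)))\<^sup>2) = 1"
proof -
  have Vc: "V \<in> carrier_mat d d"
    using V by (simp add: unitary_mat_def)
  have "1 = (cadj V * V) $$ (c,c)"
    using V c by (simp add: unitary_mat_def)
  also have "\<dots> = (\<Sum>k<d. cadj V $$ (c,k) * V $$ (k,c))"
    using Vc c by (intro index_mult_mat_sum) auto
  also have "\<dots> = (\<Sum>k<d. of_real ((cmod (V $$ (k,c)))\<^sup>2))"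
    unfolding complex_norm_square using Vc c by (intro sum.cong refl) (simp add: index_cadj mult.commute)
  also have "\<dots> = of_real (\<Sum>k<d. (cmod (V $$ (k,c)))\<^sup>2)"
    by (rule of_real_sum[symmetric])
  finally show ?thesis
    by (metis of_real_eq_1_iff)
qed

lemma phased_permutation_incoherent_unitary:
  assumes V: "V \<in> carrier_mat d d" and \<pi>: "\<pi> permutes {..<d}"
    and phase: "\<And>c. c < d \<Longrightarrow> cmod (V $$ (\<pi> c, c)) = 1"
    and off_support: "\<And>r c. r < d \<Longrightarrow> c < d \<Longrightarrow> r \<noteq> \<pi> c \<Longrightarrow> V $$ (r,c) = 0"
  shows "incoherent_unitary d V"
proof -
  have "cis (Arg (V $$ (\<pi> c, c))) = V $$ (\<pi> c, c)" if "c < d" for c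
    using phase[OF that] by (subst cis_Arg) (auto simp: sgn_div_norm)
  with V \<pi> off_support show ?thesis
    unfolding incoherent_unitary_def by (intro conjI exI[of _ \<pi>] exI[of _ "\<lambda>c. Arg (V $$ (\<pi> c, c))"]) auto
qed

lemma unitary_row_support_column_support:
  assumes V: "unitary_mat d V"
    and row_support: "\<And>i a b. i < d \<Longrightarrow> a < d \<Longrightarrow> b < d \<Longrightarrow> a \<noteq> b \<Longrightarrow> V $$ (i,a) = 0 \<or> V $$ (i,b) = 0"
    and c: "c < d"
  shows "\<exists>!r. r < d \<and> V $$ (r,c) \<noteq> 0"
proof (rule ex_ex1I)
  show "\<exists>r<d. V $$ (r,c) \<noteq> 0"
  proof (rule ccontr)
    assume "\<not> (\<exists>r<d. V $$ (r,c) \<noteq> 0)"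
    then have "(\<Sum>k<d. (cmod (V $$ (k,c)))\<^sup>2) = 0"
      by simp
    with unitary_column_norm[OF V c] show False
      by simp
  qed
next
  fix r\<^sub>1 r\<^sub>2 assume r\<^sub>1: "r\<^sub>1 < d \<and> V $$ (r\<^sub>1,c) \<noteq> 0" and r\<^sub>2: "r\<^sub>2 < d \<and> V $$ (r\<^sub>2,c) \<noteq> 0"
  have "(\<Sum>k<d. V $$ (r\<^sub>1,k) * cnj (V $$ (r\<^sub>2,k))) = (\<Sum>k<d. if k = c then V $$ (r\<^sub>1,c) * cnj (V $$ (r\<^sub>2,c)) else 0)"
    using row_support[of r\<^sub>1 c] r\<^sub>1 c by (intro sum.cong) auto
  then have "(\<Sum>k<d. V $$ (r\<^sub>1,k) * cnj (V $$ (r\<^sub>2,k))) \<noteq> 0"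
    using r\<^sub>1 r\<^sub>2 c by simp
  then show "r\<^sub>1 = r\<^sub>2"
    using unitary_rows_orthonormal[OF V, of r\<^sub>1 r\<^sub>2] r\<^sub>1 r\<^sub>2 by (auto split: if_splits)
qed

lemma unitary_row_support_incoherent_unitary:
  assumes V: "unitary_mat d V"
    and row_support: "\<And>i a b. i < d \<Longrightarrow> a < d \<Longrightarrow> b < d \<Longrightarrow> a \<noteq> b \<Longrightarrow> V $$ (i,a) = 0 \<or> V $$ (i,b) = 0"
  shows "incoherent_unitary d V"
proof -
  have column_support: "\<exists>!r. r < d \<and> V $$ (r,c) \<noteq> 0" if "c < d" for c
    using V row_support that by (rule unitary_row_support_column_support)
  define \<pi> where "\<pi> c = (if c < d then THE r. r < d \<and> V $$ (r,c) \<noteq> 0 else c)" for c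
  have \<pi>: "\<pi> c < d \<and> V $$ (\<pi> c, c) \<noteq> 0" if "c < d" for c
    using theI'[OF column_support[OF that]] that by (simp add: \<pi>_def)
  have off_support: "V $$ (r,c) = 0" if "r < d" "c < d" "r \<noteq> \<pi> c" for r c
    using column_support[of c] \<pi>[of c] that by blast
  have "cmod (V $$ (\<pi> c, c)) = 1" if c: "c < d" for c
  proof -
    have "(\<Sum>k<d. (cmod (V $$ (k,c)))\<^sup>2) = (\<Sum>k<d. if k = \<pi> c then (cmod (V $$ (\<pi> c, c)))\<^sup>2 else 0)"
      using off_support c by (intro sum.cong) auto
    then have "(cmod (V $$ (\<pi> c, c)))\<^sup>2 = 1"
      using unitary_column_norm[OF V c] \<pi>[OF c] by simp
    then show ?thesis
      using norm_ge_zero[of "V $$ (\<pi> c, c)"] by (simp add: power2_eq_1_iff)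
  qed
  moreover have "\<pi> permutes {..<d}"
  proof (rule bij_imp_permutes)
    have "inj_on \<pi> {..<d}"
      using \<pi> row_support by (intro inj_onI) (metis lessThan_iff)
    moreover have "\<pi> ` {..<d} \<subseteq> {..<d}"
      using \<pi> by auto
    ultimately show "bij_betw \<pi> {..<d} {..<d}"
      using endo_inj_surj[of "{..<d}"] by (simp add: bij_betw_def)
  qed (simp add: \<pi>_def)
  moreover have "V \<in> carrier_mat d d"
    using V by (simp add: unitary_mat_def)
  ultimately show ?thesis
    using off_support by (intro phased_permutation_incoherent_unitary) auto
qed

lemma coherent_unitary_not_conj_respects_same_diag:
  assumes "coherent_unitary d V"
  shows "\<not> conj_respects_same_diag d V"
proof
  assume respects: "conj_respects_same_diag d V"
  have V: "unitary_mat d V"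
    using assms by (simp add: coherent_unitary_def)
  moreover have "V \<in> carrier_mat d d"
    using V by (simp add: unitary_mat_def)
  ultimately have "incoherent_unitary d V"
    using conj_respects_same_diag_row_support[OF _ respects] unitary_row_support_incoherent_unitary by blast
  with assms show False
    by (simp add: coherent_unitary_def)
qed

theorem theorem1:
  fixes d :: nat and V :: "complex mat"
  assumes "coherent_unitary d V"
  shows
    "(\<forall>m U \<tau>. 0 < m \<longrightarrow> density m \<tau> \<longrightarrow> incoherent_unitary (d*m) U \<longrightarrow>
        \<not> (\<forall>\<rho>. density d \<rho> \<longrightarrow> inc_channel d m U \<tau> \<rho> = V * \<rho> * cadj V))
   \<and>
    (\<forall>(K :: nat set) m U \<tau> x \<alpha> (p :: real).
        finite K \<longrightarrow> p > 0 \<longrightarrow>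
        (\<forall>k\<in>K. 0 < m k \<and> density (m k) (\<tau> k) \<and> incoherent_unitary (d * m k) (U k)
                \<and> x k < m k \<and> \<alpha> k \<ge> 0) \<longrightarrow>
        \<not> (\<forall>\<rho>. density d \<rho> \<longrightarrow>
              (\<forall>i<d. \<forall>j<d.
                 (\<Sum>k\<in>K. inc_subchannel d (m k) (U k) (\<tau> k) (x k) (\<alpha> k) \<rho> $$ (i,j))
                   = complex_of_real p * (V * \<rho> * cadj V) $$ (i,j))))"
proof -
  note not_respects = coherent_unitary_not_conj_respects_same_diag[OF assms]
  show ?thesis
  proof (intro conjI allI impI notI)
    fix m U \<tau>
    assume "incoherent_unitary (d*m) U"
      and "\<forall>\<rho>. density d \<rho> \<longrightarrow> inc_channel d m U \<tau> \<rho> = V * \<rho> * cadj V"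
    with not_respects show False
      using conj_respects_same_diag_if_inc_channel by blast
  next
    fix K :: "nat set" and m U \<tau> x \<alpha> and p :: real
    assume "p > 0"
      and "\<forall>k\<in>K. 0 < m k \<and> density (m k) (\<tau> k) \<and> incoherent_unitary (d * m k) (U k)
                \<and> x k < m k \<and> \<alpha> k \<ge> 0"
      and "\<forall>\<rho>. density d \<rho> \<longrightarrow>
              (\<forall>i<d. \<forall>j<d.
                 (\<Sum>k\<in>K. inc_subchannel d (m k) (U k) (\<tau> k) (x k) (\<alpha> k) \<rho> $$ (i,j))
                   = complex_of_real p * (V * \<rho> * cadj V) $$ (i,j))"
    then have "conj_respects_same_diag d V"
      by (intro conj_respects_same_diag_if_sum_inc_subchannel[of K d m U p]) auto
    with not_respects show False ..
  qed
qed

end
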